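(* A sequence is the detour sequence of a complete multipartite graph if and only if it has one of the following two forms: (1) $(N)_N$, where $N$ is a positive integer; (2) $(2n)_n,\ (2n+1)_m$, where $m,n$ are positive integers with $m>n$.
   Context: All graphs are finite and simple. A complete multipartite graph $K(n_1,\ldots,n_p)$ ($p\ge 2$, parts of sizes $n_i\ge 0$) has its vertex set partitioned into independent sets of sizes $n_1,\ldots,n_p$, with two vertices adjacent if and only if they lie in different parts. The order of a path is its number of vertices. For a vertex $v$, $\tau(v)$ is the order of a longest path having $v$ as an endvertex; the detour sequence is the nondecreasing sequence of the values $\tau(v)$ over all vertices. The notation $(n)_k$ denotes the integer $n$ repeated $k$ times consecutively. *)

theory Defs
  imports "HOL-Library.Multiset"
begin

definition is_path :: "'a set \<Rightarrow> ('a \<Rightarrow> 'a \<Rightarrow> bool) \<Rightarrow> 'a list \<Rightarrow> bool" where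
  "is_path V E p \<longleftrightarrow> p \<noteq> [] \<and> distinct p \<and> set p \<subseteq> V \<and>
     (\<forall>i. Suc i < length p \<longrightarrow> E (p ! i) (p ! Suc i))"

definition detour :: "'a set \<Rightarrow> ('a \<Rightarrow> 'a \<Rightarrow> bool) \<Rightarrow> 'a \<Rightarrow> nat" where
  "detour V E v = Max {length p | p. is_path V E p \<and> (hd p = v \<or> last p = v)}"

definition detour_seq :: "'a set \<Rightarrow> ('a \<Rightarrow> 'a \<Rightarrow> bool) \<Rightarrow> nat list" where
  "detour_seq V E = sorted_list_of_multiset (image_mset (detour V E) (mset_set V))"

definition connected_graph :: "'a set \<Rightarrow> ('a \<Rightarrow> 'a \<Rightarrow> bool) \<Rightarrow> bool" where
  "connected_graph V E \<longleftrightarrow> V \<noteq> {} \<and>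
     (\<forall>u\<in>V. \<forall>v\<in>V. \<exists>p. is_path V E p \<and> hd p = u \<and> last p = v)"

text \<open>The complete multipartite graph K(n_1,...,n_p) for ns = [n_1,...,n_p]:
vertex (i,j) is the j-th vertex of part i; adjacency iff different parts.\<close>
definition cmp_vertices :: "nat list \<Rightarrow> (nat \<times> nat) set" where
  "cmp_vertices ns = {(i, j). i < length ns \<and> j < ns ! i}"

definition cmp_adj :: "nat \<times> nat \<Rightarrow> nat \<times> nat \<Rightarrow> bool" where
  "cmp_adj x y \<longleftrightarrow> fst x \<noteq> fst y"

end

(* In a complete multipartite graph a path is just a repetition-free vertex sequence in which
   consecutive vertices lie in different parts. A finite vertex set S can be run through entirely
   by such a path starting at v iff no part contains more than half of S, the part of v being
   allowed one vertex more; this follows by induction, always stepping next into a part that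
   would otherwise become too large. Conversely, a path has no two consecutive vertices in a part P,
   so it meets P at most once more than it meets the rest. Hence if no part holds more than half
   of the vertices, every detour equals the order of the graph; otherwise there is a majority part P,
   and with b vertices outside P the detour is 2b + 1 on P and 2b off P. Connectivity rules out
   b = 0 except for the one-vertex graph, and K(1,...,1) and K(m,n) realise both shapes. *)

theory Submission
  imports Defs
begin

definition class_card :: "('a \<Rightarrow> 'b) \<Rightarrow> 'a set \<Rightarrow> 'b \<Rightarrow> nat" where
  "class_card f S i = card {x\<in>S. f x = i}"

lemma sum_class_card_le_card:
  assumes "finite S" "finite I"
  shows "(\<Sum>i\<in>I. class_card f S i) \<le> card S"
proof -
  have "(\<Sum>i\<in>I. class_card f S i) = card (\<Union>i\<in>I. {x\<in>S. f x = i})"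
    unfolding class_card_def using assms by (subst card_UN_disjoint) auto
  also have "\<dots> \<le> card S"
    using assms(1) by (intro card_mono) auto
  finally show ?thesis .
qed

lemma class_card_remove:
  assumes "finite S" "v \<in> S"
  shows "class_card f (S - {v}) i = (if i = f v then class_card f S i - 1 else class_card f S i)"
proof -
  have "{x\<in>S - {v}. f x = i} = {x\<in>S. f x = i} - {v}" by auto
  then show ?thesis unfolding class_card_def using assms by auto
qed

lemma class_card_pos: "finite S \<Longrightarrow> v \<in> S \<Longrightarrow> 0 < class_card f S (f v)"
  unfolding class_card_def by (subst card_gt_0_iff) auto

lemma alternating_successor:
  assumes fin: "finite S" and v: "v \<in> S" and "S \<noteq> {v}"
    and bal: "\<And>i. 2 * class_card f S i \<le> card S + (if i = f v then 1 else 0)"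
  obtains w where "w \<in> S - {v}" "f w \<noteq> f v"
    "\<And>i. 2 * class_card f (S - {v}) i \<le> card (S - {v}) + (if i = f w then 1 else 0)"
proof -
  let ?c = "class_card f S"
  have cardS: "card (S - {v}) = card S - 1" "2 \<le> card S"
  proof -
    show "card (S - {v}) = card S - 1" using fin v by simp
    obtain u where "u \<in> S" "u \<noteq> v" using \<open>S \<noteq> {v}\<close> v by blast
    with v card_mono[OF fin, of "{u, v}"] show "2 \<le> card S" by simp
  qed
  have c_remove: "class_card f (S - {v}) i = (if i = f v then ?c i - 1 else ?c i)" for i
    using class_card_remove[OF fin v] .
  have three: "?c i + ?c j + ?c (f v) \<le> card S" if "i \<noteq> j" "i \<noteq> f v" "j \<noteq> f v" for i j
    using sum_class_card_le_card[OF fin, of "{i, j, f v}" f] that by simp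
  have other_class: "{x\<in>S - {v}. f x = i} \<noteq> {}" if "i \<noteq> f v" "0 < ?c i" for i
    using that unfolding class_card_def by (force simp: card_gt_0_iff)
  \<comment> \<open>A class other than that of v that fills exactly half of S must be entered next.\<close>
  show ?thesis
  proof (cases "\<exists>i. i \<noteq> f v \<and> 2 * ?c i = card S")
    case True
    then obtain i where i: "i \<noteq> f v" "2 * ?c i = card S" by blast
    then obtain w where w: "w \<in> S - {v}" "f w = i" using other_class cardS by fastforce
    show ?thesis
    proof (rule that[OF w(1)])
      show "f w \<noteq> f v" using w i by simp
      fix j
      show "2 * class_card f (S - {v}) j \<le> card (S - {v}) + (if j = f w then 1 else 0)"
        using bal[of j] three[of i j] i w c_remove[of j] cardS class_card_pos[OF fin v, of f]
        by (cases "j = f v"; cases "j = i") auto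
    qed
  next
    case False
    obtain w where w: "w \<in> S - {v}" "f w \<noteq> f v"
    proof (rule ccontr)
      assume "\<not> thesis"
      with that have "{x\<in>S. f x = f v} = S" by blast
      then show False using bal[of "f v"] cardS unfolding class_card_def by simp
    qed
    show ?thesis
    proof (rule that[OF w])
      fix j
      show "2 * class_card f (S - {v}) j \<le> card (S - {v}) + (if j = f w then 1 else 0)"
        using bal[of j] False c_remove[of j] cardS class_card_pos[OF fin v, of f]
        by (cases "j = f v") auto
    qed
  qed
qed

lemma alternating_enumeration:
  assumes "finite S" "v \<in> S"
    and "\<And>i. 2 * class_card f S i \<le> card S + (if i = f v then 1 else 0)"
  shows "\<exists>xs. distinct xs \<and> set xs = S \<and> hd xs = v \<and> successively (\<lambda>x y. f x \<noteq> f y) xs"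
  using assms
proof (induction "card S" arbitrary: S v rule: less_induct)
  case less
  show ?case
  proof (cases "S = {v}")
    case True
    then show ?thesis by (intro exI[of _ "[v]"]) auto
  next
    case False
    obtain w where w: "w \<in> S - {v}" "f w \<noteq> f v"
      and bal: "\<And>i. 2 * class_card f (S - {v}) i \<le> card (S - {v}) + (if i = f w then 1 else 0)"
      using alternating_successor[OF less.prems(1,2) False less.prems(3)] by metis
    have "card (S - {v}) < card S" "finite (S - {v})"
      using card_Diff1_less[OF less.prems(1,2)] less.prems(1) by auto
    from less.hyps[OF this w(1) bal] obtain xs
      where xs: "distinct xs" "set xs = S - {v}" "hd xs = w" "successively (\<lambda>x y. f x \<noteq> f y) xs"
      by metis
    have "xs \<noteq> []" using xs(2) w(1) by force
    then have "successively (\<lambda>x y. f x \<noteq> f y) (v # xs)"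
      using xs(3,4) w(2) by (simp add: successively_Cons)
    moreover have "distinct (v # xs)" using xs(1,2) by simp
    moreover have "set (v # xs) = S" using xs(2) less.prems(2) by auto
    ultimately show ?thesis by (metis list.sel(1))
  qed
qed

lemma length_filter_le_if_no_adjacent:
  assumes "successively (\<lambda>x y. \<not> (P x \<and> P y)) xs"
  shows "length (filter P xs)
    \<le> length (filter (\<lambda>x. \<not> P x) xs) + (if xs \<noteq> [] \<and> P (hd xs) then 1 else 0)"
  using assms
proof (induction xs)
  case (Cons x xs)
  then show ?case by (cases xs) (auto simp: successively_Cons)
qed simp

lemma is_path_iff_successively:
  "is_path V E p \<longleftrightarrow> p \<noteq> [] \<and> distinct p \<and> set p \<subseteq> V \<and> successively E p"
  unfolding is_path_def successively_conv_nth ..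

lemma is_path_rev: "symp E \<Longrightarrow> is_path V E p \<Longrightarrow> is_path V E (rev p)"
  unfolding is_path_iff_successively
  by (auto elim!: successively_mono dest: sympD)

lemma length_path_le_card: "finite V \<Longrightarrow> is_path V E p \<Longrightarrow> length p \<le> card V"
  unfolding is_path_def by (metis card_mono distinct_card)

lemma detour_eqI:
  assumes "symp E"
    and ex: "is_path V E p" "hd p = v" "length p = t"
    and ub: "\<And>q. is_path V E q \<Longrightarrow> hd q = v \<Longrightarrow> length q \<le> t"
  shows "detour V E v = t"
  unfolding detour_def
proof (rule Max_eqI)
  have ub': "length q \<le> t" if "is_path V E q" "hd q = v \<or> last q = v" for q
    using that(2)
  proof
    assume "last q = v"
    then show ?thesis
      using ub[OF is_path_rev[OF \<open>symp E\<close> that(1)]] that(1) by (simp add: hd_rev)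
  qed (use ub that(1) in blast)
  show "finite {length q |q. is_path V E q \<and> (hd q = v \<or> last q = v)}"
    by (rule finite_subset[of _ "{..t}"]) (auto dest: ub')
  show "y \<le> t" if "y \<in> {length q |q. is_path V E q \<and> (hd q = v \<or> last q = v)}" for y
    using that ub' by blast
  show "t \<in> {length q |q. is_path V E q \<and> (hd q = v \<or> last q = v)}"
    using ex by blast
qed

lemma detour_seq_two_values:
  assumes "finite V" "V = A \<union> B" "A \<inter> B = {}" "a \<le> b"
    and "\<And>v. v \<in> A \<Longrightarrow> detour V E v = a" "\<And>v. v \<in> B \<Longrightarrow> detour V E v = b"
  shows "detour_seq V E = replicate (card A) a @ replicate (card B) b"
proof -
  have fin: "finite A" "finite B" using assms(1,2) by auto
  have "image_mset (detour V E) (mset_set V) =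
        image_mset (detour V E) (mset_set A) + image_mset (detour V E) (mset_set B)"
    using assms(2,3) fin by (simp add: mset_set_Union)
  also have "\<dots> = image_mset (\<lambda>_. a) (mset_set A) + image_mset (\<lambda>_. b) (mset_set B)"
    using assms(5,6) fin by (intro arg_cong2[where f = "(+)"] image_mset_cong) auto
  also have "\<dots> = mset (replicate (card A) a @ replicate (card B) b)"
    by (simp add: image_mset_const_eq)
  finally have "detour_seq V E = sort (replicate (card A) a @ replicate (card B) b)"
    unfolding detour_seq_def by (simp only: sorted_list_of_multiset_mset)
  also have "\<dots> = replicate (card A) a @ replicate (card B) b"
    using assms(4) by (intro sorted_sort_id) (auto simp: sorted_append)
  finally show ?thesis .
qed

lemma symp_cmp_adj: "symp cmp_adj"
  unfolding cmp_adj_def by (auto intro: sympI)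

lemma is_path_cmp_adj_iff:
  "is_path V cmp_adj p \<longleftrightarrow>
    p \<noteq> [] \<and> distinct p \<and> set p \<subseteq> V \<and> successively (\<lambda>x y. fst x \<noteq> fst y) p"
  unfolding is_path_iff_successively cmp_adj_def ..

lemma length_path_cmp_le:
  assumes "finite V" "is_path V cmp_adj p"
  shows "length p \<le> 2 * card {u\<in>V. fst u \<noteq> i} + (if fst (hd p) = i then 1 else 0)"
proof -
  let ?P = "\<lambda>u. fst u = i"
  have p: "p \<noteq> []" "distinct p" "set p \<subseteq> V" "successively (\<lambda>x y. \<not> (?P x \<and> ?P y)) p"
    using assms(2) unfolding is_path_cmp_adj_iff by (auto elim: successively_mono)
  have "length (filter (\<lambda>u. \<not> ?P u) p) = card (set (filter (\<lambda>u. \<not> ?P u) p))"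
    using p(2) by (metis distinct_card distinct_filter)
  also have "\<dots> \<le> card {u\<in>V. fst u \<noteq> i}"
    using p(3) assms(1) by (intro card_mono) auto
  finally show ?thesis
    using length_filter_le_if_no_adjacent[OF p(4)] sum_length_filter_compl[of ?P p] p(1) by auto
qed

lemma path_cmp_spanning:
  assumes "finite S" "S \<subseteq> V" "v \<in> S"
    and "\<And>i. 2 * class_card fst S i \<le> card S + (if i = fst v then 1 else 0)"
  obtains p where "is_path V cmp_adj p" "hd p = v" "length p = card S"
proof -
  obtain p where "distinct p" "set p = S" "hd p = v" "successively (\<lambda>x y. fst x \<noteq> fst y) p"
    using alternating_enumeration[OF assms(1,3,4)] by blast
  with assms(2,3) that show ?thesis
    unfolding is_path_cmp_adj_iff by (metis distinct_card empty_iff empty_set order_refl)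
qed

lemma detour_cmp_balanced:
  assumes "finite V" "v \<in> V"
    and "\<And>i. 2 * class_card fst V i \<le> card V + (if i = fst v then 1 else 0)"
  shows "detour V cmp_adj v = card V"
proof -
  obtain p where "is_path V cmp_adj p" "hd p = v" "length p = card V"
    using path_cmp_spanning[OF assms(1) order_refl assms(2,3)] .
  then show ?thesis
    using length_path_le_card[OF assms(1)] by (intro detour_eqI[OF symp_cmp_adj]) auto
qed

lemma path_cmp_majority:
  assumes fin: "finite V" and A: "A \<subseteq> {u\<in>V. fst u = i0}"
    and v: "v \<in> A \<union> {u\<in>V. fst u \<noteq> i0}"
    and "card {u\<in>V. fst u \<noteq> i0} \<le> card A"
    and "card A \<le> card {u\<in>V. fst u \<noteq> i0} + (if fst v = i0 then 1 else 0)"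
  obtains p where "is_path V cmp_adj p" "hd p = v" "length p = card A + card {u\<in>V. fst u \<noteq> i0}"
proof -
  let ?R = "{u\<in>V. fst u \<noteq> i0}"
  have finA: "finite A" using fin A by (auto intro: finite_subset)
  have cardS: "card (A \<union> ?R) = card A + card ?R"
    using fin finA A by (intro card_Un_disjoint) auto
  have "2 * class_card fst (A \<union> ?R) i \<le> card (A \<union> ?R) + (if i = fst v then 1 else 0)" for i
  proof (cases "i = i0")
    case True
    then have "{x \<in> A \<union> ?R. fst x = i} = A" using A by auto
    then show ?thesis using assms(5) cardS True unfolding class_card_def by auto
  next
    case False
    then have "class_card fst (A \<union> ?R) i \<le> card ?R"
      unfolding class_card_def using fin A by (intro card_mono) auto
    then show ?thesis using assms(4) cardS by auto
  qed
  then show ?thesis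
    using path_cmp_spanning[of "A \<union> ?R" V v] fin finA A v that cardS by auto
qed

lemma detour_cmp_majority_part:
  assumes fin: "finite V" and maj: "card {u\<in>V. fst u \<noteq> i0} < card {u\<in>V. fst u = i0}"
    and v: "v \<in> V" "fst v = i0"
  shows "detour V cmp_adj v = 2 * card {u\<in>V. fst u \<noteq> i0} + 1"
proof -
  let ?b = "card {u\<in>V. fst u \<noteq> i0}"
  have "?b \<le> card ({u\<in>V. fst u = i0} - {v})" using maj v fin by simp
  then obtain A where A: "A \<subseteq> {u\<in>V. fst u = i0} - {v}" "card A = ?b"
    by (rule obtain_subset_with_card_n)
  have "finite A" "v \<notin> A" using fin A(1) by (auto intro: finite_subset)
  then have card_vA: "card (insert v A) = ?b + 1" using A(2) by simp
  obtain p where "is_path V cmp_adj p" "hd p = v" "length p = card (insert v A) + ?b"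
    by (rule path_cmp_majority[OF fin, of "insert v A" i0 v]) (use A v card_vA in auto)
  moreover have "length q \<le> 2 * ?b + 1" if "is_path V cmp_adj q" for q
    using length_path_cmp_le[OF fin that, of i0] by (simp split: if_splits)
  ultimately show ?thesis
    using card_vA by (intro detour_eqI[OF symp_cmp_adj]) auto
qed

lemma detour_cmp_minority_part:
  assumes fin: "finite V" and maj: "card {u\<in>V. fst u \<noteq> i0} < card {u\<in>V. fst u = i0}"
    and v: "v \<in> V" "fst v \<noteq> i0"
  shows "detour V cmp_adj v = 2 * card {u\<in>V. fst u \<noteq> i0}"
proof -
  let ?b = "card {u\<in>V. fst u \<noteq> i0}"
  obtain A where A: "A \<subseteq> {u\<in>V. fst u = i0}" "card A = ?b"
    using maj by (meson less_imp_le obtain_subset_with_card_n)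
  obtain p where "is_path V cmp_adj p" "hd p = v" "length p = card A + ?b"
    by (rule path_cmp_majority[OF fin A(1)]) (use A(2) v in auto)
  moreover have "length q \<le> 2 * ?b" if "is_path V cmp_adj q" "hd q = v" for q
    using length_path_cmp_le[OF fin that(1), of i0] that(2) v(2) by simp
  ultimately show ?thesis
    using A(2) by (intro detour_eqI[OF symp_cmp_adj]) auto
qed

lemma detour_seq_cmp_majority:
  assumes fin: "finite V" and maj: "card {u\<in>V. fst u \<noteq> i0} < card {u\<in>V. fst u = i0}"
  defines "b \<equiv> card {u\<in>V. fst u \<noteq> i0}"
  shows "detour_seq V cmp_adj =
    replicate b (2 * b) @ replicate (card {u\<in>V. fst u = i0}) (2 * b + 1)"
  unfolding b_def
  using detour_cmp_minority_part[OF fin maj] detour_cmp_majority_part[OF fin maj] fin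
  by (intro detour_seq_two_values) auto

lemma detour_seq_cmp_balanced:
  assumes "finite V" "\<And>i. 2 * class_card fst V i \<le> card V"
  shows "detour_seq V cmp_adj = replicate (card V) (card V)"
proof -
  have "detour V cmp_adj v = card V" if "v \<in> V" for v
    by (rule detour_cmp_balanced[OF assms(1) that]) (simp add: assms(2) trans_le_add1)
  then show ?thesis
    using detour_seq_two_values[of V V "{}" "card V" "card V" cmp_adj] assms(1) by simp
qed

lemma connected_graph_cmp_iff:
  "connected_graph V cmp_adj \<longleftrightarrow>
    V \<noteq> {} \<and> (\<forall>u\<in>V. \<forall>v\<in>V. u \<noteq> v \<longrightarrow> (\<exists>w\<in>V. fst w \<noteq> fst u))"
proof
  assume conn: "connected_graph V cmp_adj"
  have "\<exists>w\<in>V. fst w \<noteq> fst u" if uv: "u \<in> V" "v \<in> V" "u \<noteq> v" for u v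
  proof -
    obtain p where p: "is_path V cmp_adj p" "hd p = u" "last p = v"
      using conn uv unfolding connected_graph_def by blast
    then obtain q where "p = u # q" "q \<noteq> []"
      using uv(3) unfolding is_path_def by (metis last.simps list.collapse)
    then have "hd q \<in> V" "fst (hd q) \<noteq> fst u"
      using p(1) unfolding is_path_cmp_adj_iff by (auto simp: successively_Cons)
    then show ?thesis by blast
  qed
  then show "V \<noteq> {} \<and> (\<forall>u\<in>V. \<forall>v\<in>V. u \<noteq> v \<longrightarrow> (\<exists>w\<in>V. fst w \<noteq> fst u))"
    using conn unfolding connected_graph_def by blast
next
  assume V: "V \<noteq> {} \<and> (\<forall>u\<in>V. \<forall>v\<in>V. u \<noteq> v \<longrightarrow> (\<exists>w\<in>V. fst w \<noteq> fst u))"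
  have "\<exists>p. is_path V cmp_adj p \<and> hd p = u \<and> last p = v" if uv: "u \<in> V" "v \<in> V" for u v
  proof (cases "u = v")
    case True
    then show ?thesis using uv by (intro exI[of _ "[u]"]) (simp add: is_path_cmp_adj_iff)
  next
    case False
    then obtain w where w: "w \<in> V" "fst w \<noteq> fst u" using V uv by blast
    show ?thesis
    proof (cases "fst u = fst v")
      case True
      then show ?thesis using uv w False
        by (intro exI[of _ "[u, w, v]"]) (auto simp: is_path_cmp_adj_iff)
    next
      case False
      then show ?thesis using uv \<open>u \<noteq> v\<close>
        by (intro exI[of _ "[u, v]"]) (auto simp: is_path_cmp_adj_iff)
    qed
  qed
  then show "connected_graph V cmp_adj" using V unfolding connected_graph_def by blast
qed

lemma detour_seq_connected_cmp:
  assumes fin: "finite V" and conn: "connected_graph V cmp_adj"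
  shows "(\<exists>N\<ge>1. detour_seq V cmp_adj = replicate N N) \<or>
    (\<exists>n m. 0 < n \<and> n < m \<and> detour_seq V cmp_adj = replicate n (2 * n) @ replicate m (2 * n + 1))"
proof (cases "\<forall>i. 2 * class_card fst V i \<le> card V")
  case True
  moreover have "card V \<ge> 1"
    using conn fin unfolding connected_graph_def by (simp add: Suc_le_eq card_gt_0_iff)
  ultimately show ?thesis using detour_seq_cmp_balanced[OF fin] by blast
next
  case False
  then obtain i0 where "card V < 2 * class_card fst V i0" by (auto simp: not_le)
  moreover define b m where "b = card {u\<in>V. fst u \<noteq> i0}" and "m = card {u\<in>V. fst u = i0}"
  moreover have "b + m = card V"
    unfolding b_def m_def using fin
    by (subst card_Un_disjoint[symmetric]) (auto intro: arg_cong[where f = card])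
  ultimately have "b < m" unfolding class_card_def by simp
  with detour_seq_cmp_majority[OF fin]
  have seq: "detour_seq V cmp_adj = replicate b (2 * b) @ replicate m (2 * b + 1)"
    unfolding b_def m_def by blast
  show ?thesis
  proof (cases "b = 0")
    case True
    then have "fst u = i0" if "u \<in> V" for u using that fin unfolding b_def by (cases u) auto
    then have "card V = 1"
      using conn fin unfolding connected_graph_cmp_iff by (metis is_singletonI' is_singleton_altdef)
    then show ?thesis using seq True \<open>b + m = card V\<close> by auto
  next
    case False
    then show ?thesis using seq \<open>b < m\<close> by blast
  qed
qed

lemma finite_cmp_vertices: "finite (cmp_vertices ns)"
proof -
  have "cmp_vertices ns = (SIGMA i:{..<length ns}. {..<ns ! i})"
    unfolding cmp_vertices_def by auto
  then show ?thesis by simp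
qed

text \<open>The empty last part only serves to make the list of parts have length at least 2
  when N = 1.\<close>

lemma detour_seq_cmp_ones:
  assumes "1 \<le> N"
  defines "V \<equiv> cmp_vertices (replicate N 1 @ [0])"
  shows "connected_graph V cmp_adj" and "detour_seq V cmp_adj = replicate N N"
proof -
  have V: "V = (\<lambda>i. (i, 0)) ` {..<N}"
    unfolding V_def cmp_vertices_def by (auto simp: nth_append image_iff split: if_splits)
  then have fin: "finite V" and card_V: "card V = N" by (auto simp: card_image inj_on_def)
  show "connected_graph V cmp_adj"
    unfolding connected_graph_cmp_iff V using assms by (fastforce simp: lessThan_empty_iff)
  have "detour V cmp_adj v = N" if v: "v \<in> V" for v
  proof -
    have "2 * class_card fst V i \<le> card V + (if i = fst v then 1 else 0)" for i
    proof -
      have "class_card fst V i \<le> card {(i, 0::nat)}"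
        unfolding class_card_def V by (intro card_mono) auto
      moreover have "class_card fst V i \<le> card (V - {v})" if "i \<noteq> fst v"
        unfolding class_card_def using fin that by (intro card_mono) auto
      moreover have "card (V - {v}) = N - 1" using fin v card_V by simp
      ultimately show ?thesis using assms(1) card_V by (cases "i = fst v") auto
    qed
    then show ?thesis using detour_cmp_balanced[OF fin v] card_V by simp
  qed
  then show "detour_seq V cmp_adj = replicate N N"
    using detour_seq_two_values[of V V "{}" N N cmp_adj] fin card_V by simp
qed

lemma detour_seq_cmp_two_parts:
  assumes "0 < n" "n < m"
  defines "V \<equiv> cmp_vertices [m, n]"
  shows "connected_graph V cmp_adj"
    and "detour_seq V cmp_adj = replicate n (2 * n) @ replicate m (2 * n + 1)"
proof -
  have part0: "{u\<in>V. fst u = 0} = Pair 0 ` {..<m}"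
    and part1: "{u\<in>V. fst u \<noteq> 0} = Pair 1 ` {..<n}"
    unfolding V_def cmp_vertices_def by (auto simp: less_Suc_eq)
  have "card {u\<in>V. fst u = 0} = m" "card {u\<in>V. fst u \<noteq> 0} = n"
    unfolding part0 part1 by (simp_all add: card_image inj_on_def)
  then show "detour_seq V cmp_adj = replicate n (2 * n) @ replicate m (2 * n + 1)"
    using detour_seq_cmp_majority[OF finite_cmp_vertices[of "[m, n]", folded V_def], of 0] assms(2)
    by simp
  have "(0, 0) \<in> V" "(1, 0) \<in> V" using assms(1,2) unfolding V_def cmp_vertices_def by auto
  then show "connected_graph V cmp_adj"
    unfolding connected_graph_cmp_iff by (metis empty_iff fst_conv zero_neq_one)
qed

theorem corollary1p24:
  fixes s :: "nat list"
  shows "(\<exists>ns. length ns \<ge> 2 \<and> connected_graph (cmp_vertices ns) cmp_adj \<and>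
             s = detour_seq (cmp_vertices ns) cmp_adj)
     \<longleftrightarrow> ((\<exists>N. N \<ge> 1 \<and> s = replicate N N) \<or>
          (\<exists>n m. 0 < n \<and> n < m \<and> s = replicate n (2 * n) @ replicate m (2 * n + 1)))"
proof
  assume "\<exists>ns. length ns \<ge> 2 \<and> connected_graph (cmp_vertices ns) cmp_adj \<and>
             s = detour_seq (cmp_vertices ns) cmp_adj"
  then obtain ns
    where "connected_graph (cmp_vertices ns) cmp_adj" "s = detour_seq (cmp_vertices ns) cmp_adj"
    by blast
  then show "(\<exists>N. N \<ge> 1 \<and> s = replicate N N) \<or>
          (\<exists>n m. 0 < n \<and> n < m \<and> s = replicate n (2 * n) @ replicate m (2 * n + 1))"
    using detour_seq_connected_cmp[OF finite_cmp_vertices] by simp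
next
  assume "(\<exists>N. N \<ge> 1 \<and> s = replicate N N) \<or>
          (\<exists>n m. 0 < n \<and> n < m \<and> s = replicate n (2 * n) @ replicate m (2 * n + 1))"
  then show "\<exists>ns. length ns \<ge> 2 \<and> connected_graph (cmp_vertices ns) cmp_adj \<and>
             s = detour_seq (cmp_vertices ns) cmp_adj"
  proof (elim disjE exE conjE)
    fix N assume "N \<ge> 1" "s = replicate N N"
    then show ?thesis
      using detour_seq_cmp_ones by (intro exI[of _ "replicate N 1 @ [0]"]) auto
  next
    fix n m assume "0 < n" "n < m" "s = replicate n (2 * n) @ replicate m (2 * n + 1)"
    then show ?thesis
      using detour_seq_cmp_two_parts by (intro exI[of _ "[m, n]"]) auto
  qed
qed

end
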